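(* Let $A$ be a skew brace and endow $\mathrm{Spec}\,A$ with the spectral topology. Then every irreducible closed subset of $\mathrm{Spec}\,A$ has a unique generic point.
   Context: A (left) skew brace is a triple $(A,+,\circ)$ where $(A,+)$ and $(A,\circ)$ are groups (not necessarily abelian) such that $a\circ(b+c)=a\circ b-a+a\circ c$ for all $a,b,c\in A$; the two groups share an identity element $e$. For $a\in A$ put $\lambda_a(b)=-a+a\circ b$ and define $a*b=-a+a\circ b-b$. An ideal of $A$ is a subset $I$ that is a normal subgroup of both $(A,+)$ and $(A,\circ)$ with $\lambda_a(I)\subseteq I$ for all $a\in A$. For subsets $I,J\subseteq A$ write $I*J=\{i*j\mid i\in I,j\in J\}$. A prime ideal of $A$ is a proper ideal $P\neq A$ such that for any subsets $I,J$ of $A$, $I*J\subseteq P$ implies $I\subseteq P$ or $J\subseteq P$. $\mathrm{Spec}\,A$ is the set of prime ideals of $A$. For an ideal $I$ let $H(I)=\{P\in\mathrm{Spec}\,A\mid I\subseteq P\}$; the spectral topology on $\mathrm{Spec}\,A$ is the topology whose closed sets are the sets $H(I)$, $I$ an ideal of $A$. A closed subset $S$ of a topological space is irreducible if $S$ is not the union of two closed subsets $S_1,S_2\subsetneq S$. A point $x\in S$ is a generic point of the closed set $S$ if $S=\mathrm{cl}(\{x\})$. *)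

theory Defs
  imports "HOL-Algebra.Coset"
begin

text \<open>A skew brace on the common carrier of two groups: G is the additive
  group (A,+) (written with the HOL-Algebra product), C is the
  multiplicative group (A,o).\<close>

definition skew_brace :: "'a monoid \<Rightarrow> 'a monoid \<Rightarrow> bool" where
  "skew_brace G C \<longleftrightarrow> group G \<and> group C \<and> carrier C = carrier G \<and> \<one>\<^bsub>C\<^esub> = \<one>\<^bsub>G\<^esub> \<and>
     (\<forall>a\<in>carrier G. \<forall>b\<in>carrier G. \<forall>c\<in>carrier G.
        a \<otimes>\<^bsub>C\<^esub> (b \<otimes>\<^bsub>G\<^esub> c) = (a \<otimes>\<^bsub>C\<^esub> b) \<otimes>\<^bsub>G\<^esub> inv\<^bsub>G\<^esub> a \<otimes>\<^bsub>G\<^esub> (a \<otimes>\<^bsub>C\<^esub> c))"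

definition brace_lambda :: "'a monoid \<Rightarrow> 'a monoid \<Rightarrow> 'a \<Rightarrow> 'a \<Rightarrow> 'a" where
  "brace_lambda G C a b = inv\<^bsub>G\<^esub> a \<otimes>\<^bsub>G\<^esub> (a \<otimes>\<^bsub>C\<^esub> b)"

definition brace_star :: "'a monoid \<Rightarrow> 'a monoid \<Rightarrow> 'a \<Rightarrow> 'a \<Rightarrow> 'a" where
  "brace_star G C a b = inv\<^bsub>G\<^esub> a \<otimes>\<^bsub>G\<^esub> (a \<otimes>\<^bsub>C\<^esub> b) \<otimes>\<^bsub>G\<^esub> inv\<^bsub>G\<^esub> b"

definition brace_star_set :: "'a monoid \<Rightarrow> 'a monoid \<Rightarrow> 'a set \<Rightarrow> 'a set \<Rightarrow> 'a set" where
  "brace_star_set G C I J = {brace_star G C i j | i j. i \<in> I \<and> j \<in> J}"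

definition brace_ideal :: "'a monoid \<Rightarrow> 'a monoid \<Rightarrow> 'a set \<Rightarrow> bool" where
  "brace_ideal G C I \<longleftrightarrow> I \<lhd> G \<and> I \<lhd> C \<and>
     (\<forall>a\<in>carrier G. brace_lambda G C a ` I \<subseteq> I)"

definition brace_prime_ideal :: "'a monoid \<Rightarrow> 'a monoid \<Rightarrow> 'a set \<Rightarrow> bool" where
  "brace_prime_ideal G C P \<longleftrightarrow> brace_ideal G C P \<and> P \<noteq> carrier G \<and>
     (\<forall>I J. I \<subseteq> carrier G \<longrightarrow> J \<subseteq> carrier G \<longrightarrow>
        brace_star_set G C I J \<subseteq> P \<longrightarrow> I \<subseteq> P \<or> J \<subseteq> P)"

definition brace_Spec :: "'a monoid \<Rightarrow> 'a monoid \<Rightarrow> 'a set set" where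
  "brace_Spec G C = {P. brace_prime_ideal G C P}"

definition brace_H :: "'a monoid \<Rightarrow> 'a monoid \<Rightarrow> 'a set \<Rightarrow> 'a set set" where
  "brace_H G C I = {P \<in> brace_Spec G C. I \<subseteq> P}"

definition spec_closed :: "'a monoid \<Rightarrow> 'a monoid \<Rightarrow> 'a set set \<Rightarrow> bool" where
  "spec_closed G C S \<longleftrightarrow> (\<exists>I. brace_ideal G C I \<and> S = brace_H G C I)"

text \<open>Closure: intersection of all closed sets containing X (Spec itself is closed).\<close>
definition spec_closure :: "'a monoid \<Rightarrow> 'a monoid \<Rightarrow> 'a set set \<Rightarrow> 'a set set" where
  "spec_closure G C X = \<Inter>{S. spec_closed G C S \<and> X \<subseteq> S}"

definition spec_irreducible :: "'a monoid \<Rightarrow> 'a monoid \<Rightarrow> 'a set set \<Rightarrow> bool" where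
  "spec_irreducible G C S \<longleftrightarrow> spec_closed G C S \<and> S \<noteq> {} \<and>
     \<not> (\<exists>S1 S2. spec_closed G C S1 \<and> spec_closed G C S2 \<and> S1 \<subset> S \<and> S2 \<subset> S \<and> S = S1 \<union> S2)"

end

theory Submission
  imports Defs "HOL-Algebra.Generated_Groups"
begin

text \<open>Every irreducible closed set S is the closure of the point \<open>\<Inter>S\<close>: this intersection is an
  ideal containing the defining ideal of S, and it is prime because a factorisation
  \<open>I * J \<subseteq> \<Inter>S\<close> splits S into the two closed pieces of primes containing I and containing J.
  Uniqueness holds because a prime P is recovered from its closure \<open>H(P)\<close> as \<open>\<Inter>H(P)\<close>.
  Only the two group structures on the common carrier are used, not the brace identity.\<close>

lemma (in group) normal_Inter:
  assumes "F \<noteq> {}" and "\<And>K. K \<in> F \<Longrightarrow> K \<lhd> G"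
  shows "\<Inter>F \<lhd> G"
proof -
  have "subgroup (\<Inter>F) G"
    using subgroups_Inter assms normal_imp_subgroup by blast
  then show ?thesis
    using assms(2) normal_inv_iff by blast
qed

lemma brace_prime_ideal_imp_ideal: "brace_prime_ideal G C P \<Longrightarrow> brace_ideal G C P"
  unfolding brace_prime_ideal_def by simp

lemma brace_prime_idealD:
  assumes "brace_prime_ideal G C P" and "I \<subseteq> carrier G" and "J \<subseteq> carrier G"
    and "brace_star_set G C I J \<subseteq> P"
  shows "I \<subseteq> P \<or> J \<subseteq> P"
  using assms unfolding brace_prime_ideal_def by blast

lemma brace_ideal_subset_carrier: "brace_ideal G C I \<Longrightarrow> I \<subseteq> carrier G"
  unfolding brace_ideal_def using normal_imp_subgroup subgroup.subset by blast

lemma brace_prime_ideal_psubset_carrier: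
  assumes "brace_prime_ideal G C P"
  shows "P \<subset> carrier G"
proof -
  have "P \<subseteq> carrier G" and "P \<noteq> carrier G"
    using assms brace_ideal_subset_carrier[OF brace_prime_ideal_imp_ideal]
    unfolding brace_prime_ideal_def by simp_all
  then show ?thesis
    by (rule psubsetI)
qed

lemma Inter_brace_H_prime:
  assumes "P \<in> brace_Spec G C"
  shows "\<Inter>(brace_H G C P) = P"
  using assms unfolding brace_H_def by blast

lemma spec_closed_eq_brace_H_Inter:
  assumes "spec_closed G C S"
  shows "S = brace_H G C (\<Inter>S)"
  using assms unfolding spec_closed_def brace_H_def by blast

lemma spec_closure_singleton:
  assumes "P \<in> brace_Spec G C"
  shows "spec_closure G C {P} = brace_H G C P"
proof -
  have "spec_closed G C (brace_H G C P)"
    using assms brace_prime_ideal_imp_ideal unfolding spec_closed_def brace_Spec_def by blast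
  moreover have "P \<in> brace_H G C P"
    using assms unfolding brace_H_def by blast
  moreover have "brace_H G C P \<subseteq> S" if "spec_closed G C S" and "P \<in> S" for S
    using that unfolding spec_closed_def brace_H_def by blast
  ultimately show ?thesis
    unfolding spec_closure_def by blast
qed

lemma spec_irreducibleD:
  assumes "spec_irreducible G C S" and "spec_closed G C S1" and "spec_closed G C S2"
    and "S = S1 \<union> S2"
  shows "S1 = S \<or> S2 = S"
  using assms unfolding spec_irreducible_def by blast

definition brace_ideal_hull :: "'a monoid \<Rightarrow> 'a monoid \<Rightarrow> 'a set \<Rightarrow> 'a set" where
  "brace_ideal_hull G C X = \<Inter>{I. brace_ideal G C I \<and> X \<subseteq> I}"

lemma brace_ideal_hull_subset_iff:
  assumes "brace_ideal G C I"
  shows "brace_ideal_hull G C X \<subseteq> I \<longleftrightarrow> X \<subseteq> I"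
  using assms unfolding brace_ideal_hull_def by blast

lemma brace_H_hull: "brace_H G C (brace_ideal_hull G C X) = {P \<in> brace_Spec G C. X \<subseteq> P}"
  using brace_ideal_hull_subset_iff brace_prime_ideal_imp_ideal
  unfolding brace_H_def brace_Spec_def by blast

locale common_carrier_groups = G: group G + C: group C for G C :: "'a monoid" +
  assumes carrier_eq: "carrier C = carrier G"

lemma skew_brace_imp_common_carrier_groups:
  "skew_brace G C \<Longrightarrow> common_carrier_groups G C"
  unfolding skew_brace_def common_carrier_groups_def common_carrier_groups_axioms_def
  by blast

context common_carrier_groups
begin

lemma brace_ideal_Inter:
  assumes "F \<noteq> {}" and "\<And>I. I \<in> F \<Longrightarrow> brace_ideal G C I"
  shows "brace_ideal G C (\<Inter>F)"
  using G.normal_Inter[OF assms(1)] C.normal_Inter[OF assms(1)] assms(2)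
  unfolding brace_ideal_def by blast

lemma brace_ideal_carrier: "brace_ideal G C (carrier G)"
  using G.normal_self C.normal_self carrier_eq G.m_closed G.inv_closed
  unfolding brace_ideal_def brace_lambda_def by auto

lemma brace_ideal_hull:
  assumes "X \<subseteq> carrier G"
  shows "brace_ideal G C (brace_ideal_hull G C X)"
  unfolding brace_ideal_hull_def
proof (rule brace_ideal_Inter)
  show "{I. brace_ideal G C I \<and> X \<subseteq> I} \<noteq> {}"
    using brace_ideal_carrier assms by blast
qed blast

lemma spec_closed_supsets:
  assumes "X \<subseteq> carrier G"
  shows "spec_closed G C {P \<in> brace_Spec G C. X \<subseteq> P}"
  unfolding spec_closed_def brace_H_hull[symmetric]
  using brace_ideal_hull[OF assms] by blast

lemma spec_closed_Int:
  assumes "spec_closed G C S" and "spec_closed G C T"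
  shows "spec_closed G C (S \<inter> T)"
proof -
  obtain I J where I: "brace_ideal G C I" "S = brace_H G C I"
    and J: "brace_ideal G C J" "T = brace_H G C J"
    using assms unfolding spec_closed_def by blast
  have "I \<union> J \<subseteq> carrier G"
    using I(1) J(1) brace_ideal_subset_carrier by blast
  moreover have "S \<inter> T = {P \<in> brace_Spec G C. I \<union> J \<subseteq> P}"
    using I(2) J(2) unfolding brace_H_def by blast
  ultimately show ?thesis
    using spec_closed_supsets by metis
qed

lemma Inter_spec_irreducible_prime:
  assumes irr: "spec_irreducible G C S"
  shows "brace_prime_ideal G C (\<Inter>S)"
proof -
  have closed: "spec_closed G C S" and "S \<noteq> {}"
    using irr unfolding spec_irreducible_def by blast+
  have prime: "brace_prime_ideal G C Q" if "Q \<in> S" for Q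
    using closed that unfolding spec_closed_def brace_H_def brace_Spec_def by blast
  have "brace_ideal G C (\<Inter>S)"
    using brace_ideal_Inter[OF \<open>S \<noteq> {}\<close>] prime brace_prime_ideal_imp_ideal by blast
  moreover have "\<Inter>S \<noteq> carrier G"
  proof -
    obtain Q where "Q \<in> S"
      using \<open>S \<noteq> {}\<close> by blast
    then have "\<Inter>S \<subseteq> Q" and "Q \<subset> carrier G"
      using brace_prime_ideal_psubset_carrier[OF prime] by blast+
    then show ?thesis
      by blast
  qed
  moreover have "I \<subseteq> \<Inter>S \<or> J \<subseteq> \<Inter>S"
    if IJ: "I \<subseteq> carrier G" "J \<subseteq> carrier G" and IJ_S: "brace_star_set G C I J \<subseteq> \<Inter>S" for I J
  proof -
    let ?SI = "S \<inter> {P \<in> brace_Spec G C. I \<subseteq> P}" and ?SJ = "S \<inter> {P \<in> brace_Spec G C. J \<subseteq> P}"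
    have "I \<subseteq> Q \<or> J \<subseteq> Q" if "Q \<in> S" for Q
      using brace_prime_idealD[OF prime[OF that] IJ] IJ_S that by blast
    moreover have "S \<subseteq> brace_Spec G C"
      using prime unfolding brace_Spec_def by blast
    ultimately have "S = ?SI \<union> ?SJ"
      by blast
    moreover have "spec_closed G C ?SI" and "spec_closed G C ?SJ"
      using spec_closed_Int[OF closed spec_closed_supsets] IJ by blast+
    ultimately have "?SI = S \<or> ?SJ = S"
      using spec_irreducibleD[OF irr] by blast
    then show ?thesis
      by blast
  qed
  ultimately show ?thesis
    unfolding brace_prime_ideal_def by blast
qed

end

theorem theorem4p11:
  fixes G C :: "'a monoid" and S :: "'a set set"
  assumes "skew_brace G C"
    and "spec_irreducible G C S"
  shows "\<exists>!x. x \<in> S \<and> S = spec_closure G C {x}"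
proof (rule ex1I)
  interpret common_carrier_groups G C
    using assms(1) by (rule skew_brace_imp_common_carrier_groups)
  have closed: "spec_closed G C S"
    using assms(2) unfolding spec_irreducible_def by blast
  have "\<Inter>S \<in> brace_Spec G C"
    using Inter_spec_irreducible_prime[OF assms(2)] unfolding brace_Spec_def by blast
  moreover have "S = brace_H G C (\<Inter>S)"
    using spec_closed_eq_brace_H_Inter[OF closed] .
  ultimately show "\<Inter>S \<in> S \<and> S = spec_closure G C {\<Inter>S}"
    using spec_closure_singleton unfolding brace_H_def by blast
next
  fix P
  assume P: "P \<in> S \<and> S = spec_closure G C {P}"
  then have "P \<in> brace_Spec G C"
    using assms(2) unfolding spec_irreducible_def spec_closed_def brace_H_def by blast
  then show "P = \<Inter>S"
    using P spec_closure_singleton Inter_brace_H_prime by metis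
qed

end
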